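(* Let $L$ be a finite lattice, $C$ a nonempty convex subset of $L$, and $L[C]$ the doubling. For $a\in I_L(C)$, the element $(a,0)\in L[C]$ is left modular in $L[C]$ if and only if $a$ is left modular in $L$ and $a$ is below every maximal element of $C$. For $a\in (L\setminus I_L(C))\cup C$, the element $(a,1)\in L[C]$ is left modular in $L[C]$ if and only if $a$ is left modular in $L$ and $a$ is above every minimal element of $C$. Consequently, for $a\in C$, both $(a,0)$ and $(a,1)$ are left modular in $L[C]$ if and only if $a$ is left modular in $L$ and $a\in H(C)$.
   Context: A subset $C$ is convex if $x,y\in C$ implies $[x,y]\subseteq C$. $I_L(C)=\{y\in L\mid\exists x\in C,\ y\le x\}$. The doubling $L[C]$ is the subposet of $L\times\{0<1\}$ (product order) on $\big(I_L(C)\times\{0\}\big)\sqcup\big(((L\setminus I_L(C))\cup C)\times\{1\}\big)$; it is a lattice. The heart $H(C)$ is the set of elements of $C$ below all maximal elements of $C$ and above all minimal elements of $C$. An element $a$ of a lattice is left modular if for all $b<c$ one has $(b\vee a)\wedge c=b\vee(a\wedge c)$. *)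

theory Defs
  imports Main "HOL-Library.Product_Order"
begin

definition order_convex :: "'a::order set \<Rightarrow> bool" where
  "order_convex C \<longleftrightarrow> (\<forall>x\<in>C. \<forall>y\<in>C. {x..y} \<subseteq> C)"

definition down_closure :: "'a::order set \<Rightarrow> 'a set" where
  "down_closure C = {y. \<exists>x\<in>C. y \<le> x}"

text \<open>The doubling L[C] as a subset of L x {0<1} (False < True), with the product order.\<close>
definition doubling :: "'a::order set \<Rightarrow> ('a \<times> bool) set" where
  "doubling C = (down_closure C \<times> {False}) \<union> ((- down_closure C \<union> C) \<times> {True})"

definition maximals :: "'a::order set \<Rightarrow> 'a set" where
  "maximals C = {m\<in>C. \<forall>x\<in>C. m \<le> x \<longrightarrow> x = m}"

definition minimals :: "'a::order set \<Rightarrow> 'a set" where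
  "minimals C = {m\<in>C. \<forall>x\<in>C. x \<le> m \<longrightarrow> x = m}"

definition heart :: "'a::order set \<Rightarrow> 'a set" where
  "heart C = {x\<in>C. (\<forall>m\<in>maximals C. x \<le> m) \<and> (\<forall>m\<in>minimals C. m \<le> x)}"

definition left_modular :: "'a::lattice \<Rightarrow> bool" where
  "left_modular a \<longleftrightarrow> (\<forall>b c. b < c \<longrightarrow> inf (sup b a) c = sup b (inf a c))"

definition psup :: "'b::order set \<Rightarrow> 'b \<Rightarrow> 'b \<Rightarrow> 'b" where
  "psup P x y = (THE z. z \<in> P \<and> x \<le> z \<and> y \<le> z \<and> (\<forall>w\<in>P. x \<le> w \<and> y \<le> w \<longrightarrow> z \<le> w))"

definition pinf :: "'b::order set \<Rightarrow> 'b \<Rightarrow> 'b \<Rightarrow> 'b" where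
  "pinf P x y = (THE z. z \<in> P \<and> z \<le> x \<and> z \<le> y \<and> (\<forall>w\<in>P. w \<le> x \<and> w \<le> y \<longrightarrow> w \<le> z))"

definition left_modular_in :: "'b::order set \<Rightarrow> 'b \<Rightarrow> bool" where
  "left_modular_in P a \<longleftrightarrow>
     (\<forall>b\<in>P. \<forall>c\<in>P. b < c \<longrightarrow> pinf P (psup P b a) c = psup P b (pinf P a c))"

end

theory Submission
  imports Defs
begin

text \<open>
  Joins and meets of \<open>L[C]\<close> are computed in \<open>L\<close> on the first coordinate, the second
  coordinate being as small (for joins) or as large (for meets) as membership in \<open>L[C]\<close>
  allows. This works because the layer \<open>I_L(C) \<times> {0}\<close> is a down-set and, \<open>C\<close> being convex,
  the layer \<open>((L - I_L(C)) \<union> C) \<times> {1}\<close> is an up-set. Lifting \<open>b < c\<close> to \<open>L[C]\<close> and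
  projecting back shows that left modularity of \<open>(a,k)\<close> passes to \<open>a\<close>; testing it on
  \<open>(m,0) < (m,1)\<close> with \<open>m\<close> maximal (resp. minimal) in \<open>C\<close> gives \<open>a \<le> m\<close> (resp. \<open>m \<le> a\<close>).
  Conversely, for left modular \<open>a\<close> only the second coordinates of the two sides of the
  modular law can differ, and they do only if their common first coordinate \<open>u\<close> lies in \<open>C\<close>
  while no maximal element of \<open>C\<close> lies above \<open>u\<close> and \<open>a\<close> (resp. no minimal one below \<open>u\<close> and \<open>a\<close>).\<close>

lemma down_closure_downward: "y \<le> x \<Longrightarrow> x \<in> down_closure C \<Longrightarrow> y \<in> down_closure C"
  unfolding down_closure_def by (auto intro: order_trans)

lemma subset_down_closure: "C \<subseteq> down_closure C"
  unfolding down_closure_def by auto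

lemma order_convex_up_in_down_closure:
  "order_convex C \<Longrightarrow> x \<in> C \<Longrightarrow> x \<le> y \<Longrightarrow> y \<in> down_closure C \<Longrightarrow> y \<in> C"
  unfolding order_convex_def down_closure_def by fastforce

lemma ex_maximals_ge: "finite C \<Longrightarrow> x \<in> C \<Longrightarrow> \<exists>m\<in>maximals C. x \<le> m"
  using finite_has_maximal2[of C x] unfolding maximals_def by fastforce

lemma ex_minimals_le: "finite C \<Longrightarrow> x \<in> C \<Longrightarrow> \<exists>m\<in>minimals C. m \<le> x"
  using finite_has_minimal2[of C x] unfolding minimals_def by fastforce

lemma doubling_False_iff [simp]: "(x, False) \<in> doubling C \<longleftrightarrow> x \<in> down_closure C"
  and doubling_True_iff [simp]: "(x, True) \<in> doubling C \<longleftrightarrow> x \<notin> down_closure C \<or> x \<in> C"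
  unfolding doubling_def by auto

lemma doubling_memI:
  "(P \<Longrightarrow> (x, True) \<in> doubling C) \<Longrightarrow> (\<not> P \<Longrightarrow> (x, False) \<in> doubling C) \<Longrightarrow> (x, P) \<in> doubling C"
  by (cases P) auto

lemma doubling_False_downward:
  "(x, False) \<in> doubling C \<Longrightarrow> y \<le> x \<Longrightarrow> (y, False) \<in> doubling C"
  by (simp add: down_closure_downward)

lemma doubling_True_upward:
  assumes "order_convex C" "(x, True) \<in> doubling C" "x \<le> y"
  shows "(y, True) \<in> doubling C"
  using assms down_closure_downward order_convex_up_in_down_closure by fastforce

lemma psup_eqI:
  assumes "z \<in> P" "x \<le> z" "y \<le> z" "\<And>w. w \<in> P \<Longrightarrow> x \<le> w \<Longrightarrow> y \<le> w \<Longrightarrow> z \<le> w"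
  shows "psup P x y = z"
  unfolding psup_def by (rule the_equality) (use assms in \<open>auto intro: antisym\<close>)

lemma pinf_eqI:
  assumes "z \<in> P" "z \<le> x" "z \<le> y" "\<And>w. w \<in> P \<Longrightarrow> w \<le> x \<Longrightarrow> w \<le> y \<Longrightarrow> w \<le> z"
  shows "pinf P x y = z"
  unfolding pinf_def by (rule the_equality) (use assms in \<open>auto intro: antisym\<close>)

context
  fixes C :: "'a::lattice set"
  assumes convex: "order_convex C"
begin

lemma sup_in_doubling:
  assumes "(x, i) \<in> doubling C" "(y, j) \<in> doubling C"
  shows "(sup x y, i \<or> j \<or> (sup x y, False) \<notin> doubling C) \<in> doubling C"
proof (rule doubling_memI)
  have "(sup x y, True) \<in> doubling C" if "(x, True) \<in> doubling C \<or> (y, True) \<in> doubling C"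
    using that doubling_True_upward[OF convex] sup_ge1 sup_ge2 by blast
  then show "(sup x y, True) \<in> doubling C" if "i \<or> j \<or> (sup x y, False) \<notin> doubling C"
    using that assms by (cases i; cases j) auto
qed blast

lemma psup_doubling:
  assumes "(x, i) \<in> doubling C" "(y, j) \<in> doubling C"
  shows "psup (doubling C) (x, i) (y, j) = (sup x y, i \<or> j \<or> (sup x y, False) \<notin> doubling C)"
proof (rule psup_eqI)
  fix w assume w: "w \<in> doubling C" "(x, i) \<le> w" "(y, j) \<le> w"
  obtain v k where [simp]: "w = (v, k)" by (cases w)
  have "sup x y \<le> v" using w by (simp add: less_eq_prod_def)
  moreover have "k" if "(sup x y, False) \<notin> doubling C"
    using w(1) that doubling_False_downward[OF _ \<open>sup x y \<le> v\<close>] by (cases k) auto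
  ultimately show "(sup x y, i \<or> j \<or> (sup x y, False) \<notin> doubling C) \<le> w"
    using w by (auto simp: less_eq_prod_def)
qed (use assms sup_in_doubling in \<open>auto simp: less_eq_prod_def\<close>)

lemma inf_in_doubling:
  assumes "(x, i) \<in> doubling C" "(y, j) \<in> doubling C"
  shows "(inf x y, i \<and> j \<and> (inf x y, True) \<in> doubling C) \<in> doubling C"
proof (rule doubling_memI)
  have "(inf x y, False) \<in> doubling C" if "(x, False) \<in> doubling C \<or> (y, False) \<in> doubling C"
    using that by (metis doubling_False_downward inf_le1 inf_le2)
  then show "(inf x y, False) \<in> doubling C" if "\<not> (i \<and> j \<and> (inf x y, True) \<in> doubling C)"
    using that assms by (cases i; cases j) auto
qed blast

lemma pinf_doubling:
  assumes "(x, i) \<in> doubling C" "(y, j) \<in> doubling C"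
  shows "pinf (doubling C) (x, i) (y, j) = (inf x y, i \<and> j \<and> (inf x y, True) \<in> doubling C)"
proof (rule pinf_eqI)
  fix w assume w: "w \<in> doubling C" "w \<le> (x, i)" "w \<le> (y, j)"
  obtain v k where [simp]: "w = (v, k)" by (cases w)
  have "v \<le> inf x y" using w by (simp add: less_eq_prod_def)
  moreover have "(inf x y, True) \<in> doubling C" if k
    using w(1) that doubling_True_upward[OF convex _ \<open>v \<le> inf x y\<close>] by simp
  ultimately show "w \<le> (inf x y, i \<and> j \<and> (inf x y, True) \<in> doubling C)"
    using w by (auto simp: less_eq_prod_def)
qed (use assms inf_in_doubling in \<open>auto simp: less_eq_prod_def\<close>)

lemma pinf_psup_doubling:
  assumes "(a, k) \<in> doubling C" "(b, i) \<in> doubling C" "(c, j) \<in> doubling C"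
  shows "pinf (doubling C) (psup (doubling C) (b, i) (a, k)) (c, j) =
    (inf (sup b a) c, (i \<or> k \<or> (sup b a, False) \<notin> doubling C) \<and> j \<and> (inf (sup b a) c, True) \<in> doubling C)"
  using assms by (simp only: psup_doubling pinf_doubling sup_in_doubling)

lemma psup_pinf_doubling:
  assumes "(a, k) \<in> doubling C" "(b, i) \<in> doubling C" "(c, j) \<in> doubling C"
  shows "psup (doubling C) (b, i) (pinf (doubling C) (a, k) (c, j)) =
    (sup b (inf a c), i \<or> (k \<and> j \<and> (inf a c, True) \<in> doubling C) \<or> (sup b (inf a c), False) \<notin> doubling C)"
  using assms by (simp only: psup_doubling pinf_doubling inf_in_doubling)

end

lemma left_modular_le:
  fixes a b c :: "'a::lattice"
  assumes "left_modular a" "b \<le> c"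
  shows "inf (sup b a) c = sup b (inf a c)"
  using assms unfolding left_modular_def
  by (cases "b = c") (auto simp: inf_absorb2 sup_absorb1)

lemma left_modular_in_pairsI:
  assumes "\<And>b i c j. (b, i) \<in> P \<Longrightarrow> (c, j) \<in> P \<Longrightarrow> (b, i) < (c, j) \<Longrightarrow>
    pinf P (psup P (b, i) x) (c, j) = psup P (b, i) (pinf P x (c, j))"
  shows "left_modular_in P x"
  using assms unfolding left_modular_in_def by auto

lemma less_pairD: "(b, i) < (c, j) \<Longrightarrow> b \<le> c \<and> (i \<longrightarrow> j)"
  by (auto simp: less_prod_def less_eq_prod_def)

lemma doubling_canonical_lift:
  fixes b c :: "'a::lattice"
  assumes "b < c"
  shows "(b, b \<notin> down_closure C) \<in> doubling C" "(c, c \<notin> down_closure C) \<in> doubling C"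
    "(b, b \<notin> down_closure C) < (c, c \<notin> down_closure C)"
  using assms down_closure_downward[of b c C]
  by (auto simp: less_prod_def less_eq_prod_def less_imp_le intro: doubling_memI)

lemma left_modular_if_left_modular_in_doubling:
  fixes C :: "'a::lattice set"
  assumes convex: "order_convex C" and ak: "(a, k) \<in> doubling C"
    and lm: "left_modular_in (doubling C) (a, k)"
  shows "left_modular a"
  unfolding left_modular_def
proof (intro allI impI)
  fix b c :: 'a assume "b < c"
  note lifts = doubling_canonical_lift[OF this, of C]
  with lm have "pinf (doubling C) (psup (doubling C) (b, b \<notin> down_closure C) (a, k)) (c, c \<notin> down_closure C)
      = psup (doubling C) (b, b \<notin> down_closure C) (pinf (doubling C) (a, k) (c, c \<notin> down_closure C))"
    unfolding left_modular_in_def by blast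
  then show "inf (sup b a) c = sup b (inf a c)"
    using lifts by (simp only: pinf_psup_doubling[OF convex ak] psup_pinf_doubling[OF convex ak] prod.inject)
qed

lemma le_maximals_if_left_modular_in_doubling:
  fixes C :: "'a::lattice set"
  assumes convex: "order_convex C" and a: "(a, False) \<in> doubling C"
    and lm: "left_modular_in (doubling C) (a, False)" and m: "m \<in> maximals C"
  shows "a \<le> m"
proof -
  have mC: "m \<in> C" using m by (simp add: maximals_def)
  then have layers: "(m, False) \<in> doubling C" "(m, True) \<in> doubling C"
    using subset_down_closure by auto
  moreover have "(m, False) < (m, True)" by (simp add: less_prod_def less_eq_prod_def)
  ultimately have "pinf (doubling C) (psup (doubling C) (m, False) (a, False)) (m, True)
      = psup (doubling C) (m, False) (pinf (doubling C) (a, False) (m, True))"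
    using lm unfolding left_modular_in_def by blast
  then have "sup m a \<in> down_closure C"
    using layers by (simp add: pinf_psup_doubling[OF convex a] psup_pinf_doubling[OF convex a]
        inf_absorb2 sup_absorb1)
  then have "sup m a \<in> C" using order_convex_up_in_down_closure[OF convex mC sup_ge1] by simp
  then have "sup m a = m" using m unfolding maximals_def by auto
  then show ?thesis by (metis sup.cobounded2)
qed

lemma minimals_le_if_left_modular_in_doubling:
  fixes C :: "'a::lattice set"
  assumes convex: "order_convex C" and a: "(a, True) \<in> doubling C"
    and lm: "left_modular_in (doubling C) (a, True)" and m: "m \<in> minimals C"
  shows "m \<le> a"
proof -
  have mC: "m \<in> C" using m by (simp add: minimals_def)
  then have layers: "(m, False) \<in> doubling C" "(m, True) \<in> doubling C"
    using subset_down_closure by auto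
  moreover have "(m, False) < (m, True)" by (simp add: less_prod_def less_eq_prod_def)
  ultimately have "pinf (doubling C) (psup (doubling C) (m, False) (a, True)) (m, True)
      = psup (doubling C) (m, False) (pinf (doubling C) (a, True) (m, True))"
    using lm unfolding left_modular_in_def by blast
  then have "(inf a m, True) \<in> doubling C"
    using layers by (simp add: pinf_psup_doubling[OF convex a] psup_pinf_doubling[OF convex a]
        inf_absorb2 sup_absorb1)
  moreover have "inf a m \<in> down_closure C"
    using down_closure_downward[OF inf_le2] layers(1) by simp
  ultimately have "inf a m = m" using m unfolding minimals_def by auto
  then show ?thesis by (metis inf.cobounded1)
qed

lemma left_modular_in_doubling_False:
  fixes C :: "'a::lattice set"
  assumes convex: "order_convex C" and "finite C" and a: "(a, False) \<in> doubling C"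
    and lm: "left_modular a" and below: "\<forall>m\<in>maximals C. a \<le> m"
  shows "left_modular_in (doubling C) (a, False)"
proof (rule left_modular_in_pairsI)
  fix b i c j
  assume b: "(b, i) \<in> doubling C" and c: "(c, j) \<in> doubling C" and "(b, i) < (c, j)"
  then have "b \<le> c" "i \<longrightarrow> j" by (auto dest: less_pairD)
  define u where "u = inf (sup b a) c"
  have u_eq: "sup b (inf a c) = u" using left_modular_le[OF lm \<open>b \<le> c\<close>] by (simp add: u_def)
  have u_le: "b \<le> u" "u \<le> c" "u \<le> sup b a"
    using \<open>b \<le> c\<close> by (simp_all add: u_def)
  have "((i \<or> (sup b a, False) \<notin> doubling C) \<and> j \<and> (u, True) \<in> doubling C)
      \<longleftrightarrow> (i \<or> (u, False) \<notin> doubling C)"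
  proof (cases "(u, False) \<in> doubling C")
    case False
    then have "(sup b a, False) \<notin> doubling C" "(c, False) \<notin> doubling C"
      using u_le by (metis doubling_False_downward)+
    with False c show ?thesis by (cases j) auto
  next
    case True
    have "\<not> ((sup b a, False) \<notin> doubling C \<and> (u, True) \<in> doubling C)"
    proof
      assume "(sup b a, False) \<notin> doubling C \<and> (u, True) \<in> doubling C"
      with True have "u \<in> C" by simp
      then obtain m where "m \<in> maximals C" "u \<le> m"
        using ex_maximals_ge \<open>finite C\<close> by blast
      then have "sup b a \<le> m" "m \<in> C"
        using below u_le(1) by (auto simp: maximals_def intro: order_trans)
      then have "sup b a \<in> down_closure C" by (auto simp: down_closure_def)
      with \<open>(sup b a, False) \<notin> doubling C \<and> _\<close> show False by simp
    qed
    moreover have "(u, True) \<in> doubling C" if i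
      using b that u_le(1) doubling_True_upward[OF convex, of b u] by simp
    ultimately show ?thesis using True \<open>i \<longrightarrow> j\<close> by blast
  qed
  then show "pinf (doubling C) (psup (doubling C) (b, i) (a, False)) (c, j)
      = psup (doubling C) (b, i) (pinf (doubling C) (a, False) (c, j))"
    by (simp only: pinf_psup_doubling[OF convex a b c] psup_pinf_doubling[OF convex a b c]
        u_eq flip: u_def) simp
qed

lemma left_modular_in_doubling_True:
  fixes C :: "'a::lattice set"
  assumes convex: "order_convex C" and "finite C" and a: "(a, True) \<in> doubling C"
    and lm: "left_modular a" and above: "\<forall>m\<in>minimals C. m \<le> a"
  shows "left_modular_in (doubling C) (a, True)"
proof (rule left_modular_in_pairsI)
  fix b i c j
  assume b: "(b, i) \<in> doubling C" and c: "(c, j) \<in> doubling C" and "(b, i) < (c, j)"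
  then have "b \<le> c" "i \<longrightarrow> j" by (auto dest: less_pairD)
  define u where "u = inf (sup b a) c"
  have u_eq: "sup b (inf a c) = u" using left_modular_le[OF lm \<open>b \<le> c\<close>] by (simp add: u_def)
  have u_le: "b \<le> u" "u \<le> c" "inf a c \<le> u"
    using \<open>b \<le> c\<close> by (auto simp: u_def intro: le_supI2)
  have "(j \<and> (u, True) \<in> doubling C)
      \<longleftrightarrow> (i \<or> (j \<and> (inf a c, True) \<in> doubling C) \<or> (u, False) \<notin> doubling C)"
  proof (cases "(u, False) \<in> doubling C")
    case False
    then have "(c, False) \<notin> doubling C" using u_le by (metis doubling_False_downward)
    with False c show ?thesis by (cases j) auto
  next
    case True
    have "(inf a c, True) \<in> doubling C" if "(u, True) \<in> doubling C"
    proof -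
      from True that have "u \<in> C" by simp
      then obtain m where "m \<in> minimals C" "m \<le> u"
        using ex_minimals_le \<open>finite C\<close> by blast
      then have "m \<le> inf a c" "m \<in> C"
        using above u_le(2) by (auto simp: minimals_def intro: order_trans)
      then have "inf a c \<in> {m..u}" "m \<in> C" using u_le(3) by auto
      with \<open>u \<in> C\<close> convex have "inf a c \<in> C" unfolding order_convex_def by blast
      then show ?thesis by simp
    qed
    moreover have "(u, True) \<in> doubling C" if "(inf a c, True) \<in> doubling C"
      using convex that u_le(3) by (rule doubling_True_upward)
    moreover have "(u, True) \<in> doubling C" if i
      using b that u_le(1) doubling_True_upward[OF convex, of b u] by simp
    ultimately show ?thesis using True \<open>i \<longrightarrow> j\<close> by blast
  qed
  then show "pinf (doubling C) (psup (doubling C) (b, i) (a, True)) (c, j)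
      = psup (doubling C) (b, i) (pinf (doubling C) (a, True) (c, j))"
    by (simp only: pinf_psup_doubling[OF convex a b c] psup_pinf_doubling[OF convex a b c]
        u_eq flip: u_def) simp
qed

lemma left_modular_in_doubling_False_iff:
  fixes C :: "'a::lattice set"
  assumes "order_convex C" "finite C" "a \<in> down_closure C"
  shows "left_modular_in (doubling C) (a, False) \<longleftrightarrow> left_modular a \<and> (\<forall>m\<in>maximals C. a \<le> m)"
  using assms left_modular_if_left_modular_in_doubling le_maximals_if_left_modular_in_doubling
    left_modular_in_doubling_False by (metis doubling_False_iff)

lemma left_modular_in_doubling_True_iff:
  fixes C :: "'a::lattice set"
  assumes "order_convex C" "finite C" "a \<in> - down_closure C \<union> C"
  shows "left_modular_in (doubling C) (a, True) \<longleftrightarrow> left_modular a \<and> (\<forall>m\<in>minimals C. m \<le> a)"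
proof -
  from assms(3) have "(a, True) \<in> doubling C" by auto
  with assms show ?thesis
    using left_modular_if_left_modular_in_doubling minimals_le_if_left_modular_in_doubling
      left_modular_in_doubling_True by metis
qed

theorem proposition3p16:
  fixes C :: "'a::{finite,lattice} set"
  assumes "C \<noteq> {}" and "order_convex C"
  shows "(\<forall>a\<in>down_closure C.
            left_modular_in (doubling C) (a, False) \<longleftrightarrow>
            left_modular a \<and> (\<forall>m\<in>maximals C. a \<le> m))
       \<and> (\<forall>a\<in>(- down_closure C) \<union> C.
            left_modular_in (doubling C) (a, True) \<longleftrightarrow>
            left_modular a \<and> (\<forall>m\<in>minimals C. m \<le> a))
       \<and> (\<forall>a\<in>C.
            (left_modular_in (doubling C) (a, False) \<and> left_modular_in (doubling C) (a, True)) \<longleftrightarrow>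
            left_modular a \<and> a \<in> heart C)"
proof -
  have "finite C" by simp
  note False_iff = left_modular_in_doubling_False_iff[OF assms(2) this]
    and True_iff = left_modular_in_doubling_True_iff[OF assms(2) this]
  have "a \<in> down_closure C" "a \<in> - down_closure C \<union> C" if "a \<in> C" for a
    using that subset_down_closure by auto
  then show ?thesis
    using False_iff True_iff unfolding heart_def by blast
qed

end
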